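(* Let $d\geq 1$, let $\delta$ be a sufficiently small positive real number, let $P$ be a large positive integer, and let $1\leq q\leq P^{\delta}$, $1\leq a\leq q$ be integers with $(a,q)=1$. For $\alpha\in\mathfrak{M}(q,a)$, writing $\alpha=a/q+\beta$, we have $$F(\alpha)=q^{-2d-1}S(q,a)I(\beta)+O(P^{2d+2\delta}).$$
   Context: For an integer $d\geq 1$ define $f_d$: if $d=2k$ ($k\geq1$), $f_d(x_1,\ldots,x_d)=\prod_{i=1}^{k}(x_{2i-1}^2+x_{2i}^2)$; if $d=2k+1$ ($k\geq 0$), $f_d(x_1,\ldots,x_d)=x_1\prod_{i=1}^{k}(x_{2i}^2+x_{2i+1}^2)$. Let $f(x_1,\ldots,x_{2d+1})=f_d(x_1,\ldots,x_d)+f_d(x_{d+1},\ldots,x_{2d})-x_{2d+1}^d$. Let $e(\alpha)=e^{2\pi i\alpha}$, $B=\{1,\ldots,P\}^{2d+1}$, $F(\alpha)=\sum_{{\bf x}\in B}e(\alpha f({\bf x}))$, $\mathfrak{M}(q,a)=\{\alpha\in\mathbb{R}:|\alpha-a/q|\leq P^{\delta-d}\}$, $S(q,a)=\sum_{{\bf z}\bmod q}e\left(\frac{a}{q}f({\bf z})\right)$ (sum over ${\bf z}\in\{1,\ldots,q\}^{2d+1}$), and $I(\beta)=\int_{[0,P]^{2d+1}}e(\beta f(\xi))\,d\xi$. The implied constant in $O$ depends at most on $d$. *)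

theory Defs
  imports "HOL-Analysis.Analysis"
begin

text \<open>Vectors are functions on nat, indexed 1..n as in the paper.\<close>

definition ee :: "real \<Rightarrow> complex" where
  "ee t = cis (2 * pi * t)"

definition fd :: "nat \<Rightarrow> (nat \<Rightarrow> 'a::comm_ring_1) \<Rightarrow> 'a" where
  "fd d x = (if even d
     then (\<Prod>i=1..d div 2. x (2*i-1)^2 + x (2*i)^2)
     else x 1 * (\<Prod>i=1..d div 2. x (2*i)^2 + x (2*i+1)^2))"

definition ff :: "nat \<Rightarrow> (nat \<Rightarrow> 'a::comm_ring_1) \<Rightarrow> 'a" where
  "ff d x = fd d x + fd d (\<lambda>i. x (d + i)) - x (2*d+1) ^ d"

definition FF :: "nat \<Rightarrow> nat \<Rightarrow> real \<Rightarrow> complex" where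
  "FF d P \<alpha> = (\<Sum>x\<in>PiE {1..2*d+1} (\<lambda>_. {1..int P}). ee (\<alpha> * of_int (ff d x)))"

definition major_arc :: "nat \<Rightarrow> real \<Rightarrow> nat \<Rightarrow> nat \<Rightarrow> nat \<Rightarrow> real set" where
  "major_arc d \<delta> P q a = {\<alpha>. \<bar>\<alpha> - real a / real q\<bar> \<le> real P powr (\<delta> - real d)}"

definition SS :: "nat \<Rightarrow> nat \<Rightarrow> nat \<Rightarrow> complex" where
  "SS d q a = (\<Sum>z\<in>PiE {1..2*d+1} (\<lambda>_. {1..int q}). ee (real a / real q * of_int (ff d z)))"

definition II :: "nat \<Rightarrow> nat \<Rightarrow> real \<Rightarrow> complex" where
  "II d P \<beta> = (LINT \<xi> : PiE {1..2*d+1} (\<lambda>_. {0..real P}) | PiM {1..2*d+1} (\<lambda>_. lborel).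
                  ee (\<beta> * ff d \<xi>))"

end

theory Submission
  imports Defs "HOL-Number_Theory.Cong"
begin

(* Write alpha = a/q + beta, so every term of F factors as e(a f(x)/q) e(beta f(x)). The second
   factor is replaced by its value at the lower corner of the q-block containing x: since f has
   Lipschitz constant O(P^(d-1) q) across such a block and |beta| <= P^(delta-d), this changes
   each of the P^(2d+1) terms by O(P^(2 delta - 1)). On a complete q-block the first factor then
   averages to q^(-2d-1) S(q,a), while incomplete blocks contribute O(q P^(2d)). The corner
   values form a Riemann sum for I(beta) over unit cells with the same error. *)

lemma ee_add: "ee (s + t) = ee s * ee t"
  by (simp add: ee_def distrib_left cis_mult)

lemma ee_of_int [simp]: "ee (of_int k) = 1"
  by (simp add: ee_def)

lemma norm_ee [simp]: "norm (ee t) = 1"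
  by (simp add: ee_def)

lemma continuous_on_ee: "continuous_on A ee"
  unfolding ee_def by (intro continuous_intros)

lemma norm_ee_diff_le: "norm (ee s - ee t) \<le> 2 * pi * \<bar>s - t\<bar>"
proof -
  have "ee s - ee t = ee t * (ee (s - t) - 1)"
    using ee_add[of t "s - t"] by (simp add: algebra_simps)
  then have "norm (ee s - ee t) = norm (ee (s - t) - 1)"
    by (simp add: norm_mult)
  also have "ee (s - t) = exp (\<i> * of_real (2 * pi * (s - t)))"
    by (simp add: ee_def cis_conv_exp mult.commute)
  also have "norm (exp (\<i> * of_real (2 * pi * (s - t))) - 1) = 2 * \<bar>sin (2 * pi * (s - t) / 2)\<bar>"
    by (rule dist_exp_i_1)
  also have "\<dots> \<le> 2 * \<bar>2 * pi * (s - t) / 2\<bar>"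
    using abs_sin_x_le_abs_x by simp
  finally show ?thesis by (simp add: abs_mult)
qed

lemma of_int_fd: "(of_int (fd d x) :: 'b::comm_ring_1) = fd d (\<lambda>i. of_int (x i))"
  by (simp add: fd_def of_int_prod)

lemma of_int_ff: "(of_int (ff d x) :: 'b::comm_ring_1) = ff d (\<lambda>i. of_int (x i))"
  by (simp add: ff_def of_int_fd)

lemma fd_index_bounds:
  fixes d j :: nat
  shows "j \<le> d div 2 \<Longrightarrow> 2 * j \<le> d" "j \<le> d div 2 \<Longrightarrow> odd d \<Longrightarrow> 2 * j + 1 \<le> d"
    "odd d \<Longrightarrow> 1 \<le> d"
  by presburger+

lemma fd_cong:
  assumes "\<And>i. 1 \<le> i \<Longrightarrow> i \<le> d \<Longrightarrow> x i = y i"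
  shows "fd d x = fd d y"
  unfolding fd_def using assms fd_index_bounds by (auto intro!: prod.cong arg_cong2[where f = "(*)"])

lemma ff_cong:
  assumes "\<And>i. 1 \<le> i \<Longrightarrow> i \<le> 2 * d + 1 \<Longrightarrow> x i = y i"
  shows "ff d x = ff d y"
proof -
  have "fd d x = fd d y" "fd d (\<lambda>i. x (d + i)) = fd d (\<lambda>i. y (d + i))"
    by (auto intro!: fd_cong assms)
  then show ?thesis
    unfolding ff_def using assms[of "2 * d + 1"] by simp
qed

lemma fd_cong_mod:
  fixes x y :: "nat \<Rightarrow> int"
  assumes "\<And>i. 1 \<le> i \<Longrightarrow> i \<le> d \<Longrightarrow> [x i = y i] (mod q)"
  shows "[fd d x = fd d y] (mod q)"
  unfolding fd_def using assms fd_index_bounds by (auto intro!: cong_mult cong_prod cong_add cong_pow)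

lemma ff_cong_mod:
  fixes x y :: "nat \<Rightarrow> int"
  assumes "\<And>i. 1 \<le> i \<Longrightarrow> i \<le> 2 * d + 1 \<Longrightarrow> [x i = y i] (mod q)"
  shows "[ff d x = ff d y] (mod q)"
  unfolding ff_def using assms by (auto intro!: cong_diff cong_add cong_pow fd_cong_mod)

lemma borel_measurable_component_PiM:
  "(\<lambda>\<xi>::nat \<Rightarrow> real. \<xi> i) \<in> borel_measurable (PiM I (\<lambda>_. lborel))"
proof (cases "i \<in> I")
  case True
  then show ?thesis
    using measurable_component_singleton[of i I "\<lambda>_. lborel"] by simp
next
  case False
  have "(\<lambda>_::nat \<Rightarrow> real. undefined) \<in> borel_measurable (PiM I (\<lambda>_. lborel))"
    by simp
  then show ?thesis
    by (rule measurable_cong[THEN iffD1, rotated])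
      (use False in \<open>auto simp: space_PiM PiE_def extensional_def\<close>)
qed

lemma borel_measurable_ff:
  "(\<lambda>\<xi>::nat \<Rightarrow> real. ff d \<xi>) \<in> borel_measurable (PiM I (\<lambda>_. lborel))"
  by (cases "even d", simp_all add: ff_def fd_def)
    (intro borel_measurable_add borel_measurable_diff borel_measurable_times borel_measurable_power
      borel_measurable_prod borel_measurable_component_PiM)+

section \<open>Lipschitz bounds for the polynomial\<close>

lemma abs_prod_diff_le:
  fixes u v :: "'a \<Rightarrow> real"
  assumes "finite A"
    and "\<And>j. j \<in> A \<Longrightarrow> \<bar>u j\<bar> \<le> U" "\<And>j. j \<in> A \<Longrightarrow> \<bar>v j\<bar> \<le> U"
    and "\<And>j. j \<in> A \<Longrightarrow> \<bar>u j - v j\<bar> \<le> D"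
  shows "\<bar>prod u A - prod v A\<bar> \<le> real (card A) * U ^ (card A - 1) * D"
  using assms
proof (induction A rule: finite_induct)
  case empty
  then show ?case by simp
next
  case (insert x F)
  have U: "0 \<le> U" and D: "0 \<le> D"
    using insert.prems(1,3)[of x] by auto
  have IH: "\<bar>prod u F - prod v F\<bar> \<le> real (card F) * U ^ (card F - 1) * D"
    using insert by auto
  have "\<bar>prod u F\<bar> \<le> U ^ card F"
    using prod_mono[of F "\<lambda>j. \<bar>u j\<bar>" "\<lambda>_. U"] insert.prems by (simp add: abs_prod)
  moreover have "prod u (insert x F) - prod v (insert x F)
      = (u x - v x) * prod u F + v x * (prod u F - prod v F)"
    using insert by (simp add: algebra_simps)
  ultimately have "\<bar>prod u (insert x F) - prod v (insert x F)\<bar>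
      \<le> D * U ^ card F + U * (real (card F) * U ^ (card F - 1) * D)"
    using insert.prems IH U D
    by (auto simp: abs_mult intro!: abs_triangle_ineq[THEN order_trans] add_mono mult_mono)
  also have "\<dots> = real (card (insert x F)) * U ^ (card (insert x F) - 1) * D"
    using insert by (cases "card F") (simp_all add: algebra_simps)
  finally show ?case .
qed

lemma abs_power_diff_le:
  fixes a b :: real
  assumes "\<bar>a\<bar> \<le> P" "\<bar>b\<bar> \<le> P" "\<bar>a - b\<bar> \<le> D"
  shows "\<bar>a ^ n - b ^ n\<bar> \<le> real n * P ^ (n - 1) * D"
  using abs_prod_diff_le[of "{1..n}" "\<lambda>_. a" P "\<lambda>_. b" D] assms by simp

lemma sum_squares_diff_le:
  fixes a b a' b' :: real
  assumes "0 \<le> a" "a \<le> P" "0 \<le> b" "b \<le> P" "0 \<le> a'" "a' \<le> P" "0 \<le> b'" "b' \<le> P"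
    and "\<bar>a - a'\<bar> \<le> D" "\<bar>b - b'\<bar> \<le> D"
  shows "\<bar>(a^2 + b^2) - (a'^2 + b'^2)\<bar> \<le> 4 * P * D"
proof -
  have "\<bar>a^2 - a'^2\<bar> \<le> 2 * P * D" "\<bar>b^2 - b'^2\<bar> \<le> 2 * P * D"
    using abs_power_diff_le[of a P a' D 2] abs_power_diff_le[of b P b' D 2] assms by auto
  then show ?thesis by linarith
qed

lemma prod_sum_squares_bounds:
  fixes x y :: "nat \<Rightarrow> real" and s t :: "'a \<Rightarrow> nat"
  assumes "finite J"
    and bounds: "\<And>j i. j \<in> J \<Longrightarrow> i \<in> {s j, t j} \<Longrightarrow>
      0 \<le> x i \<and> x i \<le> P \<and> 0 \<le> y i \<and> y i \<le> P \<and> \<bar>x i - y i\<bar> \<le> D"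
  shows "\<bar>(\<Prod>j\<in>J. x (s j)^2 + x (t j)^2)\<bar> \<le> 2 ^ card J * P ^ (2 * card J)"
    and "\<bar>(\<Prod>j\<in>J. x (s j)^2 + x (t j)^2) - (\<Prod>j\<in>J. y (s j)^2 + y (t j)^2)\<bar>
      \<le> real (card J) * 2 ^ (card J + 1) * P ^ (2 * card J - 1) * D"
proof -
  have factor_x: "\<bar>x (s j)^2 + x (t j)^2\<bar> \<le> 2 * P^2"
    and factor_y: "\<bar>y (s j)^2 + y (t j)^2\<bar> \<le> 2 * P^2"
    and factor_diff: "\<bar>(x (s j)^2 + x (t j)^2) - (y (s j)^2 + y (t j)^2)\<bar> \<le> 4 * P * D"
    if "j \<in> J" for j
  proof -
    note b = bounds[OF that, of "s j"] bounds[OF that, of "t j"]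
    have "x (s j)^2 \<le> P^2" "x (t j)^2 \<le> P^2" "y (s j)^2 \<le> P^2" "y (t j)^2 \<le> P^2"
      using b by (auto intro!: power_mono)
    then show "\<bar>x (s j)^2 + x (t j)^2\<bar> \<le> 2 * P^2" "\<bar>y (s j)^2 + y (t j)^2\<bar> \<le> 2 * P^2"
      by auto
    show "\<bar>(x (s j)^2 + x (t j)^2) - (y (s j)^2 + y (t j)^2)\<bar> \<le> 4 * P * D"
      using b by (intro sum_squares_diff_le) auto
  qed
  show "\<bar>(\<Prod>j\<in>J. x (s j)^2 + x (t j)^2)\<bar> \<le> 2 ^ card J * P ^ (2 * card J)"
    using prod_mono[of J "\<lambda>j. \<bar>x (s j)^2 + x (t j)^2\<bar>" "\<lambda>_. 2 * P^2"] factor_x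
    by (simp add: abs_prod power_mult_distrib power_mult)
  have "\<bar>(\<Prod>j\<in>J. x (s j)^2 + x (t j)^2) - (\<Prod>j\<in>J. y (s j)^2 + y (t j)^2)\<bar>
      \<le> real (card J) * (2 * P^2) ^ (card J - 1) * (4 * P * D)"
    using assms(1) factor_x factor_y factor_diff by (rule abs_prod_diff_le)
  also have "\<dots> = real (card J) * 2 ^ (card J + 1) * P ^ (2 * card J - 1) * D"
    by (cases "card J") (simp_all add: power_mult_distrib power_mult[symmetric] algebra_simps)
  finally show "\<bar>(\<Prod>j\<in>J. x (s j)^2 + x (t j)^2) - (\<Prod>j\<in>J. y (s j)^2 + y (t j)^2)\<bar>
      \<le> real (card J) * 2 ^ (card J + 1) * P ^ (2 * card J - 1) * D" .
qed

lemma abs_fd_diff_le_even: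
  fixes x y :: "nat \<Rightarrow> real"
  assumes bounds: "\<And>i. 1 \<le> i \<Longrightarrow> i \<le> d \<Longrightarrow>
      0 \<le> x i \<and> x i \<le> P \<and> 0 \<le> y i \<and> y i \<le> P \<and> \<bar>x i - y i\<bar> \<le> D"
    and d: "d = 2 * k" "k \<ge> 1"
  shows "\<bar>fd d x - fd d y\<bar> \<le> real d * 2 ^ d * P ^ (d - 1) * D"
proof -
  have P: "0 \<le> P" and D: "0 \<le> D"
    using bounds[of 1] d by auto
  have "\<bar>(\<Prod>j\<in>{1..k}. x (2 * j - 1)^2 + x (2 * j)^2) - (\<Prod>j\<in>{1..k}. y (2 * j - 1)^2 + y (2 * j)^2)\<bar>
      \<le> real (card {1..k}) * 2 ^ (card {1..k} + 1) * P ^ (2 * card {1..k} - 1) * D"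
    by (rule prod_sum_squares_bounds(2)) (use bounds d in auto)
  then have "\<bar>fd d x - fd d y\<bar> \<le> real k * 2 ^ (k + 1) * P ^ (2 * k - 1) * D"
    by (simp add: fd_def d)
  also have "\<dots> \<le> real d * 2 ^ d * P ^ (d - 1) * D"
  proof -
    have "real k * 2 ^ (k + 1) \<le> real d * 2 ^ d"
      using d by (intro mult_mono power_increasing) auto
    then show ?thesis
      using d P D by (simp add: mult_right_mono mult.assoc)
  qed
  finally show ?thesis .
qed

lemma abs_fd_diff_le_odd:
  fixes x y :: "nat \<Rightarrow> real"
  assumes bounds: "\<And>i. 1 \<le> i \<Longrightarrow> i \<le> d \<Longrightarrow>
      0 \<le> x i \<and> x i \<le> P \<and> 0 \<le> y i \<and> y i \<le> P \<and> \<bar>x i - y i\<bar> \<le> D"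
    and d: "d = 2 * k + 1"
  shows "\<bar>fd d x - fd d y\<bar> \<le> real d * 2 ^ d * P ^ (d - 1) * D"
proof -
  define U where "U = (\<Prod>j\<in>{1..k}. x (2 * j)^2 + x (2 * j + 1)^2)"
  define V where "V = (\<Prod>j\<in>{1..k}. y (2 * j)^2 + y (2 * j + 1)^2)"
  have P: "0 \<le> P" and x1: "0 \<le> y 1" "y 1 \<le> P" "\<bar>x 1 - y 1\<bar> \<le> D"
    using bounds[of 1] d by auto
  have factor_bounds: "\<And>j i. j \<in> {1..k} \<Longrightarrow> i \<in> {2 * j, 2 * j + 1} \<Longrightarrow>
      0 \<le> x i \<and> x i \<le> P \<and> 0 \<le> y i \<and> y i \<le> P \<and> \<bar>x i - y i\<bar> \<le> D"
    using bounds d by auto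
  have "\<bar>U\<bar> \<le> 2 ^ card {1..k} * P ^ (2 * card {1..k})"
    and "\<bar>U - V\<bar> \<le> real (card {1..k}) * 2 ^ (card {1..k} + 1) * P ^ (2 * card {1..k} - 1) * D"
    using prod_sum_squares_bounds[of "{1..k}" "\<lambda>j. 2 * j" "\<lambda>j. 2 * j + 1" x P y D, OF _ factor_bounds]
    by (simp_all add: U_def V_def)
  then have U: "\<bar>U\<bar> \<le> 2 ^ k * P ^ (2 * k)"
    and UV: "\<bar>U - V\<bar> \<le> real k * 2 ^ (k + 1) * P ^ (2 * k - 1) * D"
    by simp_all
  have "\<bar>fd d x - fd d y\<bar> = \<bar>(x 1 - y 1) * U + y 1 * (U - V)\<bar>"
    by (simp add: fd_def d U_def V_def algebra_simps)
  also have "\<dots> \<le> \<bar>x 1 - y 1\<bar> * \<bar>U\<bar> + \<bar>y 1\<bar> * \<bar>U - V\<bar>"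
    by (metis abs_mult abs_triangle_ineq)
  also have "\<dots> \<le> D * (2 ^ k * P ^ (2 * k)) + P * (real k * 2 ^ (k + 1) * P ^ (2 * k - 1) * D)"
    using U UV x1 by (intro add_mono mult_mono) auto
  also have "\<dots> = (2 ^ k + real k * 2 ^ (k + 1)) * P ^ (2 * k) * D"
    by (cases k) (simp_all add: algebra_simps)
  also have "\<dots> \<le> real d * 2 ^ d * P ^ (d - 1) * D"
  proof -
    have "(2::real) ^ k + real k * 2 ^ (k + 1) \<le> (real k + 1) * 2 ^ (k + 1)"
      by (simp add: algebra_simps)
    also have "\<dots> \<le> real d * 2 ^ d"
      using d by (intro mult_mono power_increasing) auto
    finally show ?thesis
      using d P x1 by (simp add: mult_right_mono)
  qed
  finally show ?thesis .
qed

lemma abs_fd_diff_le: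
  fixes x y :: "nat \<Rightarrow> real"
  assumes "\<And>i. 1 \<le> i \<Longrightarrow> i \<le> d \<Longrightarrow>
      0 \<le> x i \<and> x i \<le> P \<and> 0 \<le> y i \<and> y i \<le> P \<and> \<bar>x i - y i\<bar> \<le> D"
    and "d \<ge> 1"
  shows "\<bar>fd d x - fd d y\<bar> \<le> real d * 2 ^ d * P ^ (d - 1) * D"
proof (cases "even d")
  case True
  then show ?thesis
    using assms by (intro abs_fd_diff_le_even[of d x P y D "d div 2"]) auto
next
  case False
  then show ?thesis
    using assms(1) by (intro abs_fd_diff_le_odd[of d x P y D "d div 2"]) auto
qed

lemma abs_ff_diff_le:
  fixes x y :: "nat \<Rightarrow> real"
  assumes bounds: "\<And>i. 1 \<le> i \<Longrightarrow> i \<le> 2 * d + 1 \<Longrightarrow>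
      0 \<le> x i \<and> x i \<le> P \<and> 0 \<le> y i \<and> y i \<le> P \<and> \<bar>x i - y i\<bar> \<le> D"
    and "d \<ge> 1"
  shows "\<bar>ff d x - ff d y\<bar> \<le> 3 * real d * 2 ^ d * P ^ (d - 1) * D"
proof -
  have P: "0 \<le> P" and D: "0 \<le> D"
    using bounds[of 1] by auto
  have f1: "\<bar>fd d x - fd d y\<bar> \<le> real d * 2 ^ d * P ^ (d - 1) * D"
    and f2: "\<bar>fd d (\<lambda>i. x (d + i)) - fd d (\<lambda>i. y (d + i))\<bar> \<le> real d * 2 ^ d * P ^ (d - 1) * D"
    using \<open>d \<ge> 1\<close> by (intro abs_fd_diff_le; simp add: bounds)+
  have "\<bar>x (2 * d + 1) ^ d - y (2 * d + 1) ^ d\<bar> \<le> real d * P ^ (d - 1) * D"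
    using bounds[of "2 * d + 1"] by (intro abs_power_diff_le) auto
  also have "\<dots> \<le> real d * 2 ^ d * P ^ (d - 1) * D"
    using P D by (intro mult_right_mono) (simp_all add: mult_le_cancel_left1)
  finally have f3: "\<bar>x (2 * d + 1) ^ d - y (2 * d + 1) ^ d\<bar> \<le> real d * 2 ^ d * P ^ (d - 1) * D" .
  have "\<bar>a + b - c\<bar> \<le> \<bar>a\<bar> + \<bar>b\<bar> + \<bar>c\<bar>" for a b c :: real
    by linarith
  then have "\<bar>ff d x - ff d y\<bar> \<le> \<bar>fd d x - fd d y\<bar> + \<bar>fd d (\<lambda>i. x (d + i)) - fd d (\<lambda>i. y (d + i))\<bar>
      + \<bar>x (2 * d + 1) ^ d - y (2 * d + 1) ^ d\<bar>"
    by (simp add: ff_def diff_add_eq_diff_diff_swap add_diff_add add_diff_eq diff_diff_eq2)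
  then show ?thesis
    using f1 f2 f3 by linarith
qed

section \<open>Sums over complete residue blocks\<close>

definition block_index :: "nat \<Rightarrow> ('a \<Rightarrow> int) \<Rightarrow> 'a \<Rightarrow> int" where
  "block_index q x = (\<lambda>i. (x i - 1) div int q)"

lemma card_PiE_Icc: "finite I \<Longrightarrow> card (PiE I (\<lambda>_. {1..int m})) = m ^ card I"
  by (simp add: card_PiE)

lemma int_block_div_mod:
  fixes b q z :: int
  assumes "0 < q" "1 \<le> z" "z \<le> q"
  shows "(q * b + z - 1) div q = b" "(q * b + z - 1) mod q + 1 = z"
proof -
  have e: "q * b + z - 1 = z - 1 + b * q"
    by simp
  show "(q * b + z - 1) div q = b" "(q * b + z - 1) mod q + 1 = z"
    unfolding e using assms by (simp_all add: div_pos_pos_trivial mod_pos_pos_trivial)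
qed

lemma int_block_index_bounds:
  fixes q m x :: int
  assumes "0 < q" "1 \<le> x" "x \<le> q * m"
  shows "0 \<le> (x - 1) div q" "(x - 1) div q \<le> m - 1" "1 \<le> (x - 1) mod q + 1" "(x - 1) mod q + 1 \<le> q"
proof -
  show "0 \<le> (x - 1) div q" "1 \<le> (x - 1) mod q + 1" "(x - 1) mod q + 1 \<le> q"
    using assms by (auto simp: pos_imp_zdiv_nonneg_iff add1_zle_eq)
  have "q * ((x - 1) div q) + (x - 1) mod q = x - 1"
    using div_mult_mod_eq[of "x - 1" q] by (simp add: mult.commute)
  then have "q * ((x - 1) div q) \<le> x - 1"
    using pos_mod_sign[OF assms(1), of "x - 1"] by linarith
  then have "q * ((x - 1) div q) < q * m"
    using assms(3) by linarith
  then show "(x - 1) div q \<le> m - 1"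
    using assms(1) by (simp add: mult_less_cancel_left_pos)
qed

lemma int_block_combine_bounds:
  fixes q m b z :: int
  assumes "0 < q" "0 \<le> b" "b \<le> m - 1" "1 \<le> z" "z \<le> q"
  shows "1 \<le> q * b + z" "q * b + z \<le> q * m"
proof -
  have "q * b \<le> q * (m - 1)" "0 \<le> q * b"
    using assms by (auto intro: mult_left_mono)
  moreover have "q * (m - 1) = q * m - q"
    by (simp add: right_diff_distrib)
  ultimately show "1 \<le> q * b + z" "q * b + z \<le> q * m"
    using assms by linarith+
qed

lemma sum_PiE_blocks:
  fixes f :: "('a \<Rightarrow> int) \<Rightarrow> 'c::comm_monoid_add"
  assumes "q \<ge> 1"
  shows "(\<Sum>x\<in>PiE I (\<lambda>_. {1..int (q * m)}). f x)
       = (\<Sum>b\<in>PiE I (\<lambda>_. {0..int m - 1}). \<Sum>z\<in>PiE I (\<lambda>_. {1..int q}). f (\<lambda>i\<in>I. int q * b i + z i))"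
proof -
  have q: "int q > 0"
    using assms by simp
  have recombine: "int q * ((x - 1) div int q) + ((x - 1) mod int q + 1) = x" for x :: int
    using div_mult_mod_eq[of "x - 1" "int q"] by (simp add: mult.commute)
  have "(\<Sum>x\<in>PiE I (\<lambda>_. {1..int (q * m)}). f x)
      = (\<Sum>p\<in>PiE I (\<lambda>_. {0..int m - 1}) \<times> PiE I (\<lambda>_. {1..int q}). f (\<lambda>i\<in>I. int q * fst p i + snd p i))"
  proof (rule sum.reindex_bij_witness[symmetric,
        where i = "\<lambda>x. (\<lambda>i\<in>I. (x i - 1) div int q, \<lambda>i\<in>I. (x i - 1) mod int q + 1)"
          and j = "\<lambda>p. \<lambda>i\<in>I. int q * fst p i + snd p i"])
    fix x assume "x \<in> PiE I (\<lambda>_. {1..int (q * m)})"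
    then show "(\<lambda>i\<in>I. int q * fst (\<lambda>i\<in>I. (x i - 1) div int q, \<lambda>i\<in>I. (x i - 1) mod int q + 1) i
        + snd (\<lambda>i\<in>I. (x i - 1) div int q, \<lambda>i\<in>I. (x i - 1) mod int q + 1) i) = x"
      "(\<lambda>i\<in>I. (x i - 1) div int q, \<lambda>i\<in>I. (x i - 1) mod int q + 1)
        \<in> PiE I (\<lambda>_. {0..int m - 1}) \<times> PiE I (\<lambda>_. {1..int q})"
      using int_block_index_bounds[OF q] recombine by (auto simp: PiE_iff extensional_def fun_eq_iff)
  next
    fix p assume "p \<in> PiE I (\<lambda>_. {0..int m - 1}) \<times> PiE I (\<lambda>_. {1..int q})"
    then show "(\<lambda>i\<in>I. (restrict (\<lambda>i. int q * fst p i + snd p i) I i - 1) div int q,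
          \<lambda>i\<in>I. (restrict (\<lambda>i. int q * fst p i + snd p i) I i - 1) mod int q + 1) = p"
      "(\<lambda>i\<in>I. int q * fst p i + snd p i) \<in> PiE I (\<lambda>_. {1..int (q * m)})"
      using int_block_div_mod[OF q] int_block_combine_bounds[OF q, where m = "int m"]
      by (auto simp: PiE_iff extensional_def fun_eq_iff prod_eq_iff)
  qed simp
  also have "\<dots> = (\<Sum>b\<in>PiE I (\<lambda>_. {0..int m - 1}). \<Sum>z\<in>PiE I (\<lambda>_. {1..int q}). f (\<lambda>i\<in>I. int q * b i + z i))"
    by (simp add: sum.cartesian_product case_prod_beta)
  finally show ?thesis .
qed

lemma sum_periodic_times_block_function:
  fixes w h :: "('a \<Rightarrow> int) \<Rightarrow> 'c::comm_semiring_1"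
  assumes "q \<ge> 1"
    and w_periodic: "\<And>x z. (\<And>i. i \<in> I \<Longrightarrow> [x i = z i] (mod int q)) \<Longrightarrow> w x = w z"
    and h_local: "\<And>b c. (\<And>i. i \<in> I \<Longrightarrow> b i = c i) \<Longrightarrow> h b = h c"
  shows "(\<Sum>x\<in>PiE I (\<lambda>_. {1..int (q * m)}). w x * h (block_index q x))
       = (\<Sum>z\<in>PiE I (\<lambda>_. {1..int q}). w z) * (\<Sum>b\<in>PiE I (\<lambda>_. {0..int m - 1}). h b)"
proof -
  have q: "int q > 0"
    using assms by simp
  have block: "w (\<lambda>i\<in>I. int q * b i + z i) * h (block_index q (\<lambda>i\<in>I. int q * b i + z i)) = w z * h b"
    if "z \<in> PiE I (\<lambda>_. {1..int q})" for b z
  proof -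
    have "w (\<lambda>i\<in>I. int q * b i + z i) = w z"
      by (rule w_periodic) (simp add: cong_def)
    moreover have "h (block_index q (\<lambda>i\<in>I. int q * b i + z i)) = h b"
      using that int_block_div_mod(1)[OF q] by (intro h_local) (auto simp: block_index_def PiE_iff)
    ultimately show ?thesis
      by simp
  qed
  have "(\<Sum>x\<in>PiE I (\<lambda>_. {1..int (q * m)}). w x * h (block_index q x))
      = (\<Sum>b\<in>PiE I (\<lambda>_. {0..int m - 1}). \<Sum>z\<in>PiE I (\<lambda>_. {1..int q}).
          w (\<lambda>i\<in>I. int q * b i + z i) * h (block_index q (\<lambda>i\<in>I. int q * b i + z i)))"
    by (rule sum_PiE_blocks[OF assms(1)])
  also have "\<dots> = (\<Sum>b\<in>PiE I (\<lambda>_. {0..int m - 1}). \<Sum>z\<in>PiE I (\<lambda>_. {1..int q}). w z * h b)"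
    using block by (intro sum.cong) auto
  also have "\<dots> = (\<Sum>z\<in>PiE I (\<lambda>_. {1..int q}). \<Sum>b\<in>PiE I (\<lambda>_. {0..int m - 1}). w z * h b)"
    by (rule sum.swap)
  also have "\<dots> = (\<Sum>z\<in>PiE I (\<lambda>_. {1..int q}). w z) * (\<Sum>b\<in>PiE I (\<lambda>_. {0..int m - 1}). h b)"
    by (simp add: sum_product)
  finally show ?thesis .
qed

lemma norm_sum_mean_zero_times_block_function_le:
  fixes w h :: "('a \<Rightarrow> int) \<Rightarrow> complex"
  assumes "finite I" "q \<ge> 1"
    and w_periodic: "\<And>x z. (\<And>i. i \<in> I \<Longrightarrow> [x i = z i] (mod int q)) \<Longrightarrow> w x = w z"
    and h_local: "\<And>b c. (\<And>i. i \<in> I \<Longrightarrow> b i = c i) \<Longrightarrow> h b = h c"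
    and mean_zero: "(\<Sum>z\<in>PiE I (\<lambda>_. {1..int q}). w z) = 0"
    and w_bound: "\<And>x. norm (w x) \<le> W" and h_bound: "\<And>b. norm (h b) \<le> 1"
  shows "norm (\<Sum>x\<in>PiE I (\<lambda>_. {1..int P}). w x * h (block_index q x))
      \<le> W * real (card I) * real P ^ (card I - 1) * real q"
proof -
  define n where "n = card I"
  define m where "m = P div q"
  define B where "B = PiE I (\<lambda>_. {1..int P})"
  define B' where "B' = PiE I (\<lambda>_. {1..int (q * m)})"
  have "P = q * m + P mod q" "P mod q < q"
    using \<open>q \<ge> 1\<close> by (simp_all add: m_def)
  then have qm: "q * m \<le> P" "real (q * m) \<le> real P" "real P - real (q * m) \<le> real q"
    by linarith+
  have sub: "B' \<subseteq> B"
    unfolding B_def B'_def using qm(1) by (intro PiE_mono) (auto simp flip: of_nat_mult)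
  have fin: "finite B"
    unfolding B_def using \<open>finite I\<close> by (intro finite_PiE) auto
  have W: "0 \<le> W"
    using w_bound[of undefined] norm_ge_zero order_trans by blast
  have "(\<Sum>x\<in>B'. w x * h (block_index q x))
      = (\<Sum>z\<in>PiE I (\<lambda>_. {1..int q}). w z) * (\<Sum>b\<in>PiE I (\<lambda>_. {0..int m - 1}). h b)"
    unfolding B'_def using assms(2) w_periodic h_local by (rule sum_periodic_times_block_function)
  then have "(\<Sum>x\<in>B'. w x * h (block_index q x)) = 0"
    by (simp add: mean_zero)
  then have "norm (\<Sum>x\<in>B. w x * h (block_index q x)) = norm (\<Sum>x\<in>B - B'. w x * h (block_index q x))"
    using sum.subset_diff[OF sub fin, of "\<lambda>x. w x * h (block_index q x)"] by simp
  also have "\<dots> \<le> (\<Sum>x\<in>B - B'. W)"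
  proof (rule sum_norm_le)
    fix x
    have "norm (w x) * norm (h (block_index q x)) \<le> W * 1"
      using w_bound h_bound W by (intro mult_mono) auto
    then show "norm (w x * h (block_index q x)) \<le> W"
      by (simp add: norm_mult)
  qed
  also have "\<dots> = W * (real P ^ n - real (q * m) ^ n)"
    using card_Diff_subset[OF finite_subset[OF sub fin] sub] card_mono[OF fin sub]
      card_PiE_Icc[OF \<open>finite I\<close>, of P] card_PiE_Icc[OF \<open>finite I\<close>, of "q * m"]
    by (simp add: B_def B'_def n_def of_nat_diff)
  also have "\<dots> \<le> W * (real n * real P ^ (n - 1) * real q)"
  proof -
    have "real P ^ n - real (q * m) ^ n \<le> real n * real P ^ (n - 1) * (real P - real (q * m))"
      using abs_power_diff_le[of "real P" "real P" "real (q * m)" "real P - real (q * m)" n] qm(2)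
      by (simp add: abs_le_iff)
    also have "\<dots> \<le> real n * real P ^ (n - 1) * real q"
      using qm(3) by (intro mult_left_mono) auto
    finally show ?thesis
      using W by (intro mult_left_mono)
  qed
  finally show ?thesis
    by (simp add: B_def n_def mult.assoc)
qed

section \<open>Riemann sums over unit cells\<close>

(* The cell of index 1 is closed, so the cells with indices in {1..P} partition [0,P]^I. *)
definition unit_cell :: "'a set \<Rightarrow> ('a \<Rightarrow> int) \<Rightarrow> ('a \<Rightarrow> real) set" where
  "unit_cell I x = PiE I (\<lambda>i. if x i = 1 then {0..1} else {of_int (x i) - 1 <.. of_int (x i)})"

definition cell_index :: "'a set \<Rightarrow> ('a \<Rightarrow> real) \<Rightarrow> 'a \<Rightarrow> int" where
  "cell_index I \<xi> = (\<lambda>i\<in>I. max 1 \<lceil>\<xi> i\<rceil>)"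

lemma unit_cell_bounds:
  assumes "\<xi> \<in> unit_cell I x" "i \<in> I"
  shows "of_int (x i) - 1 \<le> \<xi> i" "\<xi> i \<le> of_int (x i)"
proof -
  have "\<xi> i \<in> (if x i = 1 then {0..1} else {of_int (x i) - 1 <.. of_int (x i)})"
    using assms unfolding unit_cell_def by (rule PiE_mem)
  then show "of_int (x i) - 1 \<le> \<xi> i" "\<xi> i \<le> of_int (x i)"
    by (cases "x i = 1"; simp)+
qed

lemma cell_index_in_cube:
  assumes "\<xi> \<in> PiE I (\<lambda>_. {0..real P})" "P \<ge> 1"
  shows "cell_index I \<xi> \<in> PiE I (\<lambda>_. {1..int P})" "\<xi> \<in> unit_cell I (cell_index I \<xi>)"
proof -
  have \<xi>: "0 \<le> \<xi> i" "\<xi> i \<le> real P" if "i \<in> I" for i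
    using assms(1) that by auto
  then show "cell_index I \<xi> \<in> PiE I (\<lambda>_. {1..int P})"
    using assms(2) by (auto simp: cell_index_def ceiling_le_iff)
  have mem: "\<xi> i \<in> (if max 1 \<lceil>\<xi> i\<rceil> = 1 then {0..1} else {of_int (max 1 \<lceil>\<xi> i\<rceil>) - 1 <.. of_int (max 1 \<lceil>\<xi> i\<rceil>)})"
    if "i \<in> I" for i
  proof (cases "\<lceil>\<xi> i\<rceil> \<le> 1")
    case True
    then show ?thesis
      using \<xi>[OF that] by (simp add: max_absorb1 ceiling_le_iff)
  next
    case False
    then have "max 1 \<lceil>\<xi> i\<rceil> = \<lceil>\<xi> i\<rceil>" "\<lceil>\<xi> i\<rceil> \<noteq> 1"
      by (simp_all only: not_le)
    then show ?thesis
      using ceiling_correct[of "\<xi> i"] by simp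
  qed
  show "\<xi> \<in> unit_cell I (cell_index I \<xi>)"
    unfolding unit_cell_def
  proof (rule PiE_I)
    show "\<xi> i \<in> (if cell_index I \<xi> i = 1 then {0..1}
        else {of_int (cell_index I \<xi> i) - 1 <.. of_int (cell_index I \<xi> i)})" if "i \<in> I" for i
      using mem[OF that] that by (simp only: cell_index_def restrict_apply if_True)
    show "\<xi> i = undefined" if "i \<notin> I" for i
      using assms(1) that by auto
  qed
qed

lemma cell_index_eq:
  assumes "x \<in> PiE I (\<lambda>_. {1..int P})" "\<xi> \<in> unit_cell I x"
  shows "cell_index I \<xi> = x"
proof
  fix i
  show "cell_index I \<xi> i = x i"
  proof (cases "i \<in> I")
    case True
    have x: "1 \<le> x i"
      using PiE_mem[OF assms(1) True] by simp
    have "\<xi> i \<in> (if x i = 1 then {0..1} else {of_int (x i) - 1 <.. of_int (x i)})"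
      using assms(2) True unfolding unit_cell_def by (rule PiE_mem)
    then have "max 1 \<lceil>\<xi> i\<rceil> = x i"
    proof (cases "x i = 1")
      case True
      then show ?thesis
        using \<open>\<xi> i \<in> _\<close> by (simp add: ceiling_le_iff)
    next
      case False
      then have "\<lceil>\<xi> i\<rceil> = x i"
        using \<open>\<xi> i \<in> _\<close> by (intro ceiling_unique) auto
      then show ?thesis
        using x by simp
    qed
    then show ?thesis
      using True by (simp add: cell_index_def)
  next
    case False
    then show ?thesis
      using PiE_arb[OF assms(1) False] by (simp add: cell_index_def)
  qed
qed

lemma unit_cell_subset_cube:
  assumes "x \<in> PiE I (\<lambda>_. {1..int P})"
  shows "unit_cell I x \<subseteq> PiE I (\<lambda>_. {0..real P})"
proof
  fix \<xi> assume \<xi>: "\<xi> \<in> unit_cell I x"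
  have "0 \<le> \<xi> i \<and> \<xi> i \<le> real P" if "i \<in> I" for i
  proof -
    have "1 \<le> x i" "x i \<le> int P"
      using assms that by auto
    then show ?thesis
      using unit_cell_bounds[OF \<xi> that] by linarith
  qed
  moreover have "\<xi> \<in> extensional I"
    using \<xi> by (simp add: unit_cell_def PiE_iff)
  ultimately show "\<xi> \<in> PiE I (\<lambda>_. {0..real P})"
    by (simp add: PiE_iff)
qed

lemma
  assumes "finite I"
  shows sets_unit_cell: "unit_cell I x \<in> sets (PiM I (\<lambda>_. lborel))"
    and emeasure_unit_cell: "emeasure (PiM I (\<lambda>_. lborel)) (unit_cell I x) = 1"
proof -
  interpret product_sigma_finite "\<lambda>_::'a. lborel"
    by standard
  show "unit_cell I x \<in> sets (PiM I (\<lambda>_. lborel))"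
    unfolding unit_cell_def using assms by (intro sets_PiM_I_finite) auto
  have "emeasure (PiM I (\<lambda>_. lborel)) (unit_cell I x)
      = (\<Prod>i\<in>I. emeasure lborel (if x i = 1 then {0..1::real} else {of_int (x i) - 1 <.. of_int (x i)}))"
    unfolding unit_cell_def using assms by (intro emeasure_PiM) auto
  also have "\<dots> = 1"
    by (intro prod.neutral) simp
  finally show "emeasure (PiM I (\<lambda>_. lborel)) (unit_cell I x) = 1" .
qed

lemma
  fixes c :: real
  assumes "finite I"
  shows sets_cube: "PiE I (\<lambda>_. {0..c}) \<in> sets (PiM I (\<lambda>_. lborel))"
    and emeasure_cube: "0 \<le> c \<Longrightarrow> emeasure (PiM I (\<lambda>_. lborel)) (PiE I (\<lambda>_. {0..c})) = c ^ card I"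
proof -
  interpret product_sigma_finite "\<lambda>_::'a. lborel"
    by standard
  show "PiE I (\<lambda>_. {0..c}) \<in> sets (PiM I (\<lambda>_. lborel))"
    using assms by (intro sets_PiM_I_finite) auto
  assume "0 \<le> c"
  have "emeasure (PiM I (\<lambda>_. lborel)) (PiE I (\<lambda>_. {0..c})) = (\<Prod>i\<in>I. emeasure lborel {0..c})"
    using assms by (intro emeasure_PiM) auto
  also have "\<dots> = ennreal (c ^ card I)"
    using \<open>0 \<le> c\<close> by (simp add: ennreal_power)
  finally show "emeasure (PiM I (\<lambda>_. lborel)) (PiE I (\<lambda>_. {0..c})) = c ^ card I" .
qed

lemma sum_indicator_unit_cells:
  fixes v :: "('a \<Rightarrow> int) \<Rightarrow> 'b::real_vector"
  assumes "finite I" "P \<ge> 1"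
  shows "(\<Sum>x\<in>PiE I (\<lambda>_. {1..int P}). indicator (unit_cell I x) \<xi> *\<^sub>R v x)
       = indicator (PiE I (\<lambda>_. {0..real P})) \<xi> *\<^sub>R v (cell_index I \<xi>)"
proof (cases "\<xi> \<in> PiE I (\<lambda>_. {0..real P})")
  case True
  have "(\<Sum>x\<in>PiE I (\<lambda>_. {1..int P}). indicator (unit_cell I x) \<xi> *\<^sub>R v x)
      = (\<Sum>x\<in>PiE I (\<lambda>_. {1..int P}). if x = cell_index I \<xi> then v x else 0)"
  proof (rule sum.cong)
    fix x assume "x \<in> PiE I (\<lambda>_. {1..int P})"
    then have "\<xi> \<in> unit_cell I x \<longleftrightarrow> x = cell_index I \<xi>"
      using cell_index_eq cell_index_in_cube(2)[OF True assms(2)] by blast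
    then show "indicator (unit_cell I x) \<xi> *\<^sub>R v x = (if x = cell_index I \<xi> then v x else 0)"
      unfolding indicator_def by simp
  qed simp
  also have "\<dots> = v (cell_index I \<xi>)"
    using cell_index_in_cube(1)[OF True assms(2)] assms(1) by (simp add: sum.delta' finite_PiE)
  finally show ?thesis
    using True by simp
next
  case False
  then have "\<xi> \<notin> unit_cell I x" if "x \<in> PiE I (\<lambda>_. {1..int P})" for x
    using unit_cell_subset_cube[OF that] by blast
  then show ?thesis
    using False by simp
qed

lemma
  fixes v :: "('a \<Rightarrow> int) \<Rightarrow> 'b::{banach, second_countable_topology}"
  assumes "finite I" "P \<ge> 1"
  shows integrable_cell_step_function:
      "integrable (PiM I (\<lambda>_. lborel)) (\<lambda>\<xi>. indicator (PiE I (\<lambda>_. {0..real P})) \<xi> *\<^sub>R v (cell_index I \<xi>))"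
    and integral_cell_step_function:
      "(\<integral>\<xi>. indicator (PiE I (\<lambda>_. {0..real P})) \<xi> *\<^sub>R v (cell_index I \<xi>) \<partial>PiM I (\<lambda>_. lborel))
        = (\<Sum>x\<in>PiE I (\<lambda>_. {1..int P}). v x)"
proof -
  let ?M = "PiM I (\<lambda>_::'a. lborel :: real measure)"
  have cell: "integrable ?M (\<lambda>\<xi>. indicator (unit_cell I x) \<xi> *\<^sub>R v x)"
    "integral\<^sup>L ?M (\<lambda>\<xi>. indicator (unit_cell I x) \<xi> *\<^sub>R v x) = v x" for x
    using sets_unit_cell[OF assms(1)] emeasure_unit_cell[OF assms(1)]
    by (simp_all add: integrable_indicator_iff measure_def)
  note step = sum_indicator_unit_cells[OF assms, symmetric]
  show "integrable ?M (\<lambda>\<xi>. indicator (PiE I (\<lambda>_. {0..real P})) \<xi> *\<^sub>R v (cell_index I \<xi>))"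
    unfolding step using cell(1) by (rule Bochner_Integration.integrable_sum)
  show "integral\<^sup>L ?M (\<lambda>\<xi>. indicator (PiE I (\<lambda>_. {0..real P})) \<xi> *\<^sub>R v (cell_index I \<xi>))
      = (\<Sum>x\<in>PiE I (\<lambda>_. {1..int P}). v x)"
    unfolding step using cell by (subst Bochner_Integration.integral_sum) auto
qed

lemma norm_integral_cube_minus_cell_sum_le:
  fixes g :: "('a \<Rightarrow> real) \<Rightarrow> complex" and v :: "('a \<Rightarrow> int) \<Rightarrow> complex"
  assumes "finite I" "P \<ge> 1"
    and g_measurable: "g \<in> borel_measurable (PiM I (\<lambda>_. lborel))"
    and g_bound: "\<And>\<xi>. norm (g \<xi>) \<le> 1"
    and approx: "\<And>x \<xi>. x \<in> PiE I (\<lambda>_. {1..int P}) \<Longrightarrow> \<xi> \<in> unit_cell I x \<Longrightarrow> norm (g \<xi> - v x) \<le> \<epsilon>"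
  shows "norm ((LINT \<xi>:PiE I (\<lambda>_. {0..real P})|PiM I (\<lambda>_. lborel). g \<xi>) - (\<Sum>x\<in>PiE I (\<lambda>_. {1..int P}). v x))
      \<le> real P ^ card I * \<epsilon>"
proof -
  define M where "M = PiM I (\<lambda>_::'a. lborel :: real measure)"
  define D where "D = PiE I (\<lambda>_::'a. {0..real P})"
  define s where "s \<xi> = indicator D \<xi> *\<^sub>R v (cell_index I \<xi>)" for \<xi>
  have D: "D \<in> sets M" "emeasure M D = real P ^ card I"
    using sets_cube[OF assms(1)] emeasure_cube[OF assms(1)] by (simp_all add: M_def D_def)
  have int_D: "integrable M (indicator D :: _ \<Rightarrow> real)"
    using D by (simp add: integrable_indicator_iff)
  have int_s: "integrable M s"
    unfolding s_def M_def D_def using assms(1,2) by (rule integrable_cell_step_function)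
  have int_g: "integrable M (\<lambda>\<xi>. indicator D \<xi> *\<^sub>R g \<xi>)"
  proof (rule Bochner_Integration.integrable_bound[OF int_D])
    show "(\<lambda>\<xi>. indicator D \<xi> *\<^sub>R g \<xi>) \<in> borel_measurable M"
      using g_measurable D(1) unfolding M_def by (intro borel_measurable_scaleR borel_measurable_indicator)
    have "norm (indicator D \<xi> *\<^sub>R g \<xi>) \<le> norm (indicator D \<xi> :: real)" for \<xi>
      using g_bound[of \<xi>] by (simp add: indicator_def)
    then show "AE \<xi> in M. norm (indicator D \<xi> *\<^sub>R g \<xi>) \<le> norm (indicator D \<xi> :: real)"
      by simp
  qed
  have pointwise: "norm (indicator D \<xi> *\<^sub>R g \<xi> - s \<xi>) \<le> indicator D \<xi> * \<epsilon>" for \<xi>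
  proof (cases "\<xi> \<in> D")
    case True
    then have "norm (g \<xi> - v (cell_index I \<xi>)) \<le> \<epsilon>"
      using approx[OF cell_index_in_cube[OF _ assms(2)]] by (simp add: D_def)
    then show ?thesis
      using True by (simp add: s_def)
  qed (simp add: s_def)
  have "norm (integral\<^sup>L M (\<lambda>\<xi>. indicator D \<xi> *\<^sub>R g \<xi>) - integral\<^sup>L M s)
      = norm (integral\<^sup>L M (\<lambda>\<xi>. indicator D \<xi> *\<^sub>R g \<xi> - s \<xi>))"
    using int_g int_s by simp
  also have "\<dots> \<le> integral\<^sup>L M (\<lambda>\<xi>. norm (indicator D \<xi> *\<^sub>R g \<xi> - s \<xi>))"
    by (rule integral_norm_bound)
  also have "\<dots> \<le> integral\<^sup>L M (\<lambda>\<xi>. indicator D \<xi> * \<epsilon>)"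
    using int_g int_s int_D pointwise by (intro integral_mono) auto
  also have "\<dots> = real P ^ card I * \<epsilon>"
    using D by (simp add: measure_def)
  finally show ?thesis
    unfolding s_def M_def D_def integral_cell_step_function[OF assms(1,2)]
    by (simp add: set_lebesgue_integral_def)
qed

section \<open>Approximation on a major arc\<close>

definition block_corner :: "nat \<Rightarrow> ('a \<Rightarrow> int) \<Rightarrow> 'a \<Rightarrow> real" where
  "block_corner q x = (\<lambda>i. of_int (int q * block_index q x i))"

lemma block_corner_bounds:
  assumes "q \<ge> 1" "1 \<le> x i"
  shows "0 \<le> block_corner q x i" "block_corner q x i \<le> of_int (x i) - 1"
    "of_int (x i) - block_corner q x i \<le> real q"
proof -
  have q: "int q > 0"
    using assms(1) by simp
  have e: "int q * block_index q x i + (x i - 1) mod int q = x i - 1"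
    using div_mult_mod_eq[of "x i - 1" "int q"] by (simp add: block_index_def mult.commute)
  have "0 \<le> block_index q x i"
    using assms(2) q by (simp add: block_index_def pos_imp_zdiv_nonneg_iff)
  moreover have "0 \<le> (x i - 1) mod int q" "(x i - 1) mod int q < int q"
    using q by simp_all
  ultimately have "0 \<le> int q * block_index q x i" "int q * block_index q x i \<le> x i - 1"
    "x i - int q * block_index q x i \<le> int q"
    using e q by (simp_all, linarith+)
  then show "0 \<le> block_corner q x i" "block_corner q x i \<le> of_int (x i) - 1"
    "of_int (x i) - block_corner q x i \<le> real q"
    unfolding block_corner_def by linarith+
qed

lemma abs_ff_diff_block_corner_le:
  fixes \<xi> :: "nat \<Rightarrow> real"
  assumes "d \<ge> 1" "q \<ge> 1" "x \<in> PiE {1..2 * d + 1} (\<lambda>_. {1..int P})"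
    and near: "\<And>i. i \<in> {1..2 * d + 1} \<Longrightarrow> of_int (x i) - 1 \<le> \<xi> i \<and> \<xi> i \<le> of_int (x i)"
  shows "\<bar>ff d \<xi> - ff d (block_corner q x)\<bar> \<le> 3 * real d * 2 ^ d * real P ^ (d - 1) * real q"
proof (rule abs_ff_diff_le[OF _ assms(1)])
  fix i assume i: "1 \<le> i" "i \<le> 2 * d + 1"
  then have x: "1 \<le> x i" "x i \<le> int P"
    using assms(3) by auto
  show "0 \<le> \<xi> i \<and> \<xi> i \<le> real P \<and> 0 \<le> block_corner q x i \<and> block_corner q x i \<le> real P
      \<and> \<bar>\<xi> i - block_corner q x i\<bar> \<le> real q"
    using near[of i] i x block_corner_bounds[OF assms(2), of x i] by auto
qed

lemma norm_SS_le: "norm (SS d q a) \<le> real q ^ (2 * d + 1)"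
proof -
  have "norm (SS d q a) \<le> (\<Sum>z\<in>PiE {1..2 * d + 1} (\<lambda>_. {1..int q}). norm (ee (real a / real q * of_int (ff d z))))"
    unfolding SS_def by (rule norm_sum)
  also have "\<dots> = real q ^ (2 * d + 1)"
    by (simp add: card_PiE_Icc)
  finally show ?thesis .
qed

lemma norm_SS_div_le_1:
  assumes "q \<ge> 1"
  shows "norm (SS d q a / of_nat q ^ (2 * d + 1)) \<le> 1"
proof -
  have "norm (of_nat q ^ (2 * d + 1) :: complex) = real q ^ (2 * d + 1)"
    by (simp only: norm_power norm_of_nat)
  then show ?thesis
    using norm_SS_le[of d q a] assms by (simp add: norm_divide divide_le_eq_1 del: of_nat_power)
qed

lemma ee_ff_periodic:
  assumes "q \<ge> 1" "\<And>i. i \<in> {1..2 * d + 1} \<Longrightarrow> [x i = z i] (mod int q)"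
  shows "ee (real a / real q * of_int (ff d x)) = ee (real a / real q * of_int (ff d z))"
proof -
  have "[ff d x = ff d z] (mod int q)"
    using assms(2) by (intro ff_cong_mod) auto
  then obtain k where k: "ff d x = ff d z + int q * k"
    by (metis cong_iff_lin cong_sym)
  have "real a / real q * of_int (ff d x) = real a / real q * of_int (ff d z) + of_int (int a * k)"
    using assms(1) by (simp add: k algebra_simps)
  then show ?thesis
    by (simp only: ee_add ee_of_int mult_1_right)
qed

lemma norm_ee_ff_diff_block_corner_le:
  fixes \<xi> :: "nat \<Rightarrow> real"
  assumes "d \<ge> 1" "q \<ge> 1" "x \<in> PiE {1..2 * d + 1} (\<lambda>_. {1..int P})"
    and "\<And>i. i \<in> {1..2 * d + 1} \<Longrightarrow> of_int (x i) - 1 \<le> \<xi> i \<and> \<xi> i \<le> of_int (x i)"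
  shows "norm (ee (\<beta> * ff d \<xi>) - ee (\<beta> * ff d (block_corner q x)))
      \<le> 2 * pi * \<bar>\<beta>\<bar> * (3 * real d * 2 ^ d * real P ^ (d - 1) * real q)"
proof -
  have "\<bar>\<beta> * ff d \<xi> - \<beta> * ff d (block_corner q x)\<bar> = \<bar>\<beta>\<bar> * \<bar>ff d \<xi> - ff d (block_corner q x)\<bar>"
    by (simp add: abs_mult flip: right_diff_distrib)
  then have "norm (ee (\<beta> * ff d \<xi>) - ee (\<beta> * ff d (block_corner q x)))
      \<le> 2 * pi * (\<bar>\<beta>\<bar> * \<bar>ff d \<xi> - ff d (block_corner q x)\<bar>)"
    using norm_ee_diff_le[of "\<beta> * ff d \<xi>" "\<beta> * ff d (block_corner q x)"] by simp
  also have "\<dots> \<le> 2 * pi * (\<bar>\<beta>\<bar> * (3 * real d * 2 ^ d * real P ^ (d - 1) * real q))"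
    using abs_ff_diff_block_corner_le[OF assms] by (intro mult_left_mono) auto
  finally show ?thesis
    by (simp add: mult.assoc)
qed

lemma FF_eq_sum_phases:
  "FF d P \<alpha> = (\<Sum>x\<in>PiE {1..2 * d + 1} (\<lambda>_. {1..int P}).
      ee (real a / real q * of_int (ff d x)) * ee ((\<alpha> - real a / real q) * ff d (\<lambda>i. of_int (x i))))"
  unfolding FF_def
proof (rule sum.cong[OF refl])
  fix x :: "nat \<Rightarrow> int"
  have "ff d (\<lambda>i. of_int (x i)) = (of_int (ff d x) :: real)"
    by (rule of_int_ff[symmetric])
  then have "\<alpha> * of_int (ff d x) = real a / real q * of_int (ff d x) + (\<alpha> - real a / real q) * ff d (\<lambda>i. of_int (x i))"
    by (simp add: left_diff_distrib)
  then show "ee (\<alpha> * of_int (ff d x))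
      = ee (real a / real q * of_int (ff d x)) * ee ((\<alpha> - real a / real q) * ff d (\<lambda>i. of_int (x i)))"
    by (simp add: ee_add)
qed

lemma norm_FF_minus_block_sum_le:
  assumes "d \<ge> 1" "q \<ge> 1"
  shows "norm (FF d P \<alpha> - (\<Sum>x\<in>PiE {1..2 * d + 1} (\<lambda>_. {1..int P}).
      ee (real a / real q * of_int (ff d x)) * ee ((\<alpha> - real a / real q) * ff d (block_corner q x))))
    \<le> real P ^ (2 * d + 1) * (2 * pi * \<bar>\<alpha> - real a / real q\<bar> * (3 * real d * 2 ^ d * real P ^ (d - 1) * real q))"
    (is "norm (_ - ?S) \<le> _ * ?\<epsilon>")
proof -
  let ?B = "PiE {1..2 * d + 1} (\<lambda>_. {1..int P})"
  let ?w = "\<lambda>x. ee (real a / real q * of_int (ff d x))"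
  let ?G = "\<lambda>\<xi>. ee ((\<alpha> - real a / real q) * ff d \<xi>)"
  have "FF d P \<alpha> - ?S = (\<Sum>x\<in>?B. ?w x * ?G (\<lambda>i. of_int (x i)) - ?w x * ?G (block_corner q x))"
    unfolding FF_eq_sum_phases[where a = a and q = q] by (rule sum_subtractf[symmetric])
  also have "\<dots> = (\<Sum>x\<in>?B. ?w x * (?G (\<lambda>i. of_int (x i)) - ?G (block_corner q x)))"
    by (simp only: right_diff_distrib)
  finally have "norm (FF d P \<alpha> - ?S) = norm (\<Sum>x\<in>?B. ?w x * (?G (\<lambda>i. of_int (x i)) - ?G (block_corner q x)))"
    by (rule arg_cong)
  also have "\<dots> \<le> (\<Sum>x\<in>?B. ?\<epsilon>)"
  proof (rule sum_norm_le)
    fix x assume "x \<in> ?B"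
    then have "norm (?G (\<lambda>i. of_int (x i)) - ?G (block_corner q x)) \<le> ?\<epsilon>"
      using assms by (intro norm_ee_ff_diff_block_corner_le) auto
    then show "norm (?w x * (?G (\<lambda>i. of_int (x i)) - ?G (block_corner q x))) \<le> ?\<epsilon>"
      by (simp add: norm_mult)
  qed
  also have "\<dots> = real P ^ (2 * d + 1) * ?\<epsilon>"
    by (simp add: card_PiE_Icc)
  finally show ?thesis .
qed

lemma norm_block_sum_minus_mean_le:
  assumes "q \<ge> 1"
  shows "norm ((\<Sum>x\<in>PiE {1..2 * d + 1} (\<lambda>_. {1..int P}).
        ee (real a / real q * of_int (ff d x)) * ee (\<beta> * ff d (block_corner q x)))
      - SS d q a / of_nat q ^ (2 * d + 1) * (\<Sum>x\<in>PiE {1..2 * d + 1} (\<lambda>_. {1..int P}). ee (\<beta> * ff d (block_corner q x))))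
    \<le> 2 * real (2 * d + 1) * real P ^ (2 * d) * real q"
proof -
  let ?I = "{1..2 * d + 1}"
  let ?mean = "SS d q a / of_nat q ^ (2 * d + 1)"
  define w where "w x = ee (real a / real q * of_int (ff d x)) - ?mean" for x :: "nat \<Rightarrow> int"
  define h where "h b = ee (\<beta> * ff d (\<lambda>i. of_int (int q * b i)))" for b :: "nat \<Rightarrow> int"
  have "norm (\<Sum>x\<in>PiE ?I (\<lambda>_. {1..int P}). w x * h (block_index q x))
      \<le> 2 * real (card ?I) * real P ^ (card ?I - 1) * real q"
  proof (rule norm_sum_mean_zero_times_block_function_le)
    show "w x = w z" if "\<And>i. i \<in> ?I \<Longrightarrow> [x i = z i] (mod int q)" for x z
      unfolding w_def using ee_ff_periodic[OF assms that] by simp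
    show "h b = h c" if "\<And>i. i \<in> ?I \<Longrightarrow> b i = c i" for b c
      unfolding h_def using that by (intro arg_cong[where f = "\<lambda>t. ee (\<beta> * t)"] ff_cong) auto
    have "(\<Sum>z\<in>PiE ?I (\<lambda>_. {1..int q}). w z) = SS d q a - of_nat (q ^ (2 * d + 1)) * ?mean"
      by (simp add: w_def SS_def sum_subtractf card_PiE_Icc)
    then show "(\<Sum>z\<in>PiE ?I (\<lambda>_. {1..int q}). w z) = 0"
      using assms by simp
    have "norm ?mean \<le> 1"
      using assms by (rule norm_SS_div_le_1)
    then show "norm (w x) \<le> 2" for x
      using norm_triangle_ineq4[of "ee (real a / real q * of_int (ff d x))" ?mean] by (simp add: w_def)
    show "norm (h b) \<le> 1" for b
      by (simp add: h_def)
  qed (use assms in auto)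
  moreover have "h (block_index q x) = ee (\<beta> * ff d (block_corner q x))" for x
    by (simp add: h_def block_corner_def)
  ultimately show ?thesis
    by (simp add: w_def left_diff_distrib sum_subtractf sum_distrib_left)
qed

lemma norm_II_minus_block_sum_le:
  assumes "d \<ge> 1" "q \<ge> 1" "P \<ge> 1"
  shows "norm (II d P \<beta> - (\<Sum>x\<in>PiE {1..2 * d + 1} (\<lambda>_. {1..int P}). ee (\<beta> * ff d (block_corner q x))))
    \<le> real P ^ (2 * d + 1) * (2 * pi * \<bar>\<beta>\<bar> * (3 * real d * 2 ^ d * real P ^ (d - 1) * real q))"
proof -
  let ?I = "{1..2 * d + 1}"
  have "norm ((LINT \<xi>:PiE ?I (\<lambda>_. {0..real P})|PiM ?I (\<lambda>_. lborel). ee (\<beta> * ff d \<xi>))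
      - (\<Sum>x\<in>PiE ?I (\<lambda>_. {1..int P}). ee (\<beta> * ff d (block_corner q x))))
    \<le> real P ^ card ?I * (2 * pi * \<bar>\<beta>\<bar> * (3 * real d * 2 ^ d * real P ^ (d - 1) * real q))"
  proof (rule norm_integral_cube_minus_cell_sum_le)
    show "(\<lambda>\<xi>. ee (\<beta> * ff d \<xi>)) \<in> borel_measurable (PiM ?I (\<lambda>_. lborel))"
      by (intro borel_measurable_continuous_on[OF continuous_on_ee] borel_measurable_times
          borel_measurable_const borel_measurable_ff)
    fix x \<xi> assume x: "x \<in> PiE ?I (\<lambda>_. {1..int P})" and \<xi>: "\<xi> \<in> unit_cell ?I x"
    show "norm (ee (\<beta> * ff d \<xi>) - ee (\<beta> * ff d (block_corner q x)))
        \<le> 2 * pi * \<bar>\<beta>\<bar> * (3 * real d * 2 ^ d * real P ^ (d - 1) * real q)"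
      using unit_cell_bounds[OF \<xi>] by (intro norm_ee_ff_diff_block_corner_le[OF assms(1,2) x]) blast
  qed (use assms in auto)
  then show ?thesis
    by (simp add: II_def)
qed

lemma FF_minus_main_term_le:
  fixes \<alpha> :: real and a :: nat
  assumes "d \<ge> 1" "P \<ge> 1" "q \<ge> 1"
  defines "\<epsilon> \<equiv> 2 * pi * \<bar>\<alpha> - real a / real q\<bar> * (3 * real d * 2 ^ d * real P ^ (d - 1) * real q)"
  shows "cmod (FF d P \<alpha> - complex_of_real (1 / real q ^ (2 * d + 1)) * SS d q a * II d P (\<alpha> - real a / real q))
    \<le> 2 * (real P ^ (2 * d + 1) * \<epsilon>) + 2 * real (2 * d + 1) * real P ^ (2 * d) * real q"
proof -
  let ?B = "PiE {1..2 * d + 1} (\<lambda>_. {1..int P})"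
  let ?\<beta> = "\<alpha> - real a / real q"
  let ?mean = "SS d q a / of_nat q ^ (2 * d + 1)"
  let ?G = "\<lambda>x. ee (?\<beta> * ff d (block_corner q x))"
  define S1 where "S1 = (\<Sum>x\<in>?B. ee (real a / real q * of_int (ff d x)) * ?G x)"
  define S2 where "S2 = (\<Sum>x\<in>?B. ?G x)"
  have E1: "norm (FF d P \<alpha> - S1) \<le> real P ^ (2 * d + 1) * \<epsilon>"
    unfolding S1_def \<epsilon>_def using assms(1,3) by (rule norm_FF_minus_block_sum_le)
  have E2: "norm (S1 - ?mean * S2) \<le> 2 * real (2 * d + 1) * real P ^ (2 * d) * real q"
    unfolding S1_def S2_def using assms(3) by (rule norm_block_sum_minus_mean_le)
  have E3: "norm (II d P ?\<beta> - S2) \<le> real P ^ (2 * d + 1) * \<epsilon>"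
    unfolding S2_def \<epsilon>_def using assms(1,3,2) by (rule norm_II_minus_block_sum_le)
  have mean: "norm ?mean \<le> 1"
    using assms(3) by (rule norm_SS_div_le_1)
  have coefficient: "complex_of_real (1 / real q ^ (2 * d + 1)) * SS d q a = ?mean"
    by (simp add: field_simps)
  have split: "X - m * Y = (X - S1) + (S1 - m * S2) - m * (Y - S2)" for X Y m :: complex
    by (simp add: algebra_simps)
  have triangle: "norm (A + B - C) \<le> norm A + norm B + norm C" for A B C :: complex
    using norm_triangle_ineq4[of "A + B" C] norm_triangle_ineq[of A B] by linarith
  have "cmod (FF d P \<alpha> - complex_of_real (1 / real q ^ (2 * d + 1)) * SS d q a * II d P ?\<beta>)
      \<le> norm (FF d P \<alpha> - S1) + norm (S1 - ?mean * S2) + norm ?mean * norm (II d P ?\<beta> - S2)"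
    unfolding coefficient split[of "FF d P \<alpha>" ?mean] using triangle by (metis norm_mult)
  also have "\<dots> \<le> real P ^ (2 * d + 1) * \<epsilon> + 2 * real (2 * d + 1) * real P ^ (2 * d) * real q
      + 1 * (real P ^ (2 * d + 1) * \<epsilon>)"
    using E1 E2 E3 mean by (intro add_mono mult_mono) auto
  finally show ?thesis
    by linarith
qed

lemma major_arc_error_terms_le:
  fixes P q d :: nat and \<beta> \<delta> :: real
  assumes "P \<ge> 1" "d \<ge> 1" "0 \<le> \<delta>" "real q \<le> real P powr \<delta>" "\<bar>\<beta>\<bar> \<le> real P powr (\<delta> - real d)"
  shows "real P ^ (2 * d + 1) * (\<bar>\<beta>\<bar> * real P ^ (d - 1) * real q) \<le> real P powr (2 * real d + 2 * \<delta>)"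
    and "real P ^ (2 * d) * real q \<le> real P powr (2 * real d + 2 * \<delta>)"
proof -
  have P: "real P > 0"
    using assms(1) by simp
  have "2 * d + 1 + (d - 1) = 3 * d"
    using assms(2) by simp
  then have "real P ^ (2 * d + 1) * real P ^ (d - 1) = real P ^ (3 * d)"
    by (simp only: power_add[symmetric])
  also have "\<dots> = real P powr (3 * real d)"
    using powr_realpow[OF P, of "3 * d"] by simp
  finally have powers: "real P ^ (2 * d + 1) * real P ^ (d - 1) = real P powr (3 * real d)" .
  have "real P ^ (2 * d + 1) * (\<bar>\<beta>\<bar> * real P ^ (d - 1) * real q)
      = (real P ^ (2 * d + 1) * real P ^ (d - 1)) * (\<bar>\<beta>\<bar> * real q)"
    by (simp only: mult_ac)
  also have "\<dots> \<le> real P powr (3 * real d) * (real P powr (\<delta> - real d) * real P powr \<delta>)"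
    unfolding powers using assms(4,5) by (intro mult_left_mono mult_mono) auto
  also have "\<dots> = real P powr (2 * real d + 2 * \<delta>)"
    by (simp flip: powr_add)
  finally show "real P ^ (2 * d + 1) * (\<bar>\<beta>\<bar> * real P ^ (d - 1) * real q) \<le> real P powr (2 * real d + 2 * \<delta>)" .
  have "real P ^ (2 * d) * real q \<le> real P powr (2 * real d) * real P powr \<delta>"
    using assms(4) powr_realpow[OF P, of "2 * d"] by (intro mult_mono) auto
  also have "\<dots> \<le> real P powr (2 * real d + 2 * \<delta>)"
    unfolding powr_add[symmetric] using assms(1,3) by (intro powr_mono) auto
  finally show "real P ^ (2 * d) * real q \<le> real P powr (2 * real d + 2 * \<delta>)" .
qed

lemma FF_minus_main_term_major_arc_le:
  assumes "d \<ge> 1" "P \<ge> 1" "q \<ge> 1" "0 \<le> \<delta>" "real q \<le> real P powr \<delta>"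
    and "\<alpha> \<in> major_arc d \<delta> P q a"
  shows "cmod (FF d P \<alpha> - complex_of_real (1 / real q ^ (2 * d + 1)) * SS d q a * II d P (\<alpha> - real a / real q))
    \<le> (12 * pi * real d * 2 ^ d + 2 * real (2 * d + 1)) * real P powr (2 * real d + 2 * \<delta>)"
proof -
  let ?\<beta> = "\<alpha> - real a / real q"
  let ?R = "real P powr (2 * real d + 2 * \<delta>)"
  have \<beta>: "\<bar>?\<beta>\<bar> \<le> real P powr (\<delta> - real d)"
    using assms(6) by (simp add: major_arc_def)
  note bounds = major_arc_error_terms_le[OF assms(2,1,4,5) \<beta>]
  have "real P ^ (2 * d + 1) * (2 * pi * \<bar>?\<beta>\<bar> * (3 * real d * 2 ^ d * real P ^ (d - 1) * real q))
      = (6 * pi * real d * 2 ^ d) * (real P ^ (2 * d + 1) * (\<bar>?\<beta>\<bar> * real P ^ (d - 1) * real q))"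
    by (simp add: mult_ac)
  also have "\<dots> \<le> (6 * pi * real d * 2 ^ d) * ?R"
    using bounds(1) by (intro mult_left_mono) auto
  finally have main: "real P ^ (2 * d + 1) * (2 * pi * \<bar>?\<beta>\<bar> * (3 * real d * 2 ^ d * real P ^ (d - 1) * real q))
      \<le> (6 * pi * real d * 2 ^ d) * ?R" .
  have minor: "2 * real (2 * d + 1) * real P ^ (2 * d) * real q \<le> 2 * real (2 * d + 1) * ?R"
    using bounds(2) by (simp add: mult.assoc mult_left_mono)
  have "cmod (FF d P \<alpha> - complex_of_real (1 / real q ^ (2 * d + 1)) * SS d q a * II d P ?\<beta>)
      \<le> 2 * ((6 * pi * real d * 2 ^ d) * ?R) + 2 * real (2 * d + 1) * ?R"
    using FF_minus_main_term_le[OF assms(1-3), of \<alpha> a] main minor by linarith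
  also have "\<dots> = (12 * pi * real d * 2 ^ d + 2 * real (2 * d + 1)) * ?R"
    by (simp add: algebra_simps)
  finally show ?thesis .
qed

theorem lemma3p1:
  fixes d :: nat
  assumes "d \<ge> 1"
  shows "\<exists>\<delta>0>0. \<exists>C. \<forall>\<delta>::real. 0 < \<delta> \<and> \<delta> \<le> \<delta>0 \<longrightarrow>
    (\<exists>P0. \<forall>P::nat. P \<ge> P0 \<longrightarrow>
      (\<forall>q a :: nat. 1 \<le> q \<and> real q \<le> real P powr \<delta> \<and> 1 \<le> a \<and> a \<le> q \<and> coprime a q \<longrightarrow>
        (\<forall>\<alpha>\<in>major_arc d \<delta> P q a.
           cmod (FF d P \<alpha> - complex_of_real (1 / real q ^ (2*d+1)) * SS d q a
                   * II d P (\<alpha> - real a / real q))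
             \<le> C * real P powr (2 * real d + 2 * \<delta>))))"
  \<comment> \<open>The estimate holds for all \<open>\<delta> \<ge> 0\<close> and \<open>P \<ge> 1\<close>.\<close>
  by (rule exI[of _ "1::real"])
    (use FF_minus_main_term_major_arc_le[OF assms] in
      \<open>auto intro!: exI[of _ "12 * pi * real d * 2 ^ d + 2 * real (2 * d + 1)"] exI[of _ "1::nat"]\<close>)

end
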